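(* Fix a constant $c>0$. There is a constant $C$ (depending only on $c$) such that for every $n=2^k$ and every $c$-Ramsey graph $G$ with $n$ vertices, the formula $\Psi_G$ has a treelike resolution refutation with at most $n^{C\log n}$ clauses; i.e. of size $n^{O(\log n)}$.
   Context: Logarithms are base 2. A graph $G$ on $n$ vertices is $c$-Ramsey if no set of $c\log n$ vertices is a clique or an independent set. A resolution refutation of a CNF is a sequence of clauses, each a clause of the formula or derived from earlier clauses $A\lor x$, $B\lor\neg x$ as $A\lor B$, ending in the empty clause; it is treelike if each derived clause is used as a premise at most once. For a graph $G$ on $n=2^k$ vertices, identify vertices with strings $v=v_1\cdots v_k\in\{0,1\}^k$ (assume $ck$ is an integer). $\Psi_G$ has variables $x^i_b$ ($i\in[ck]$, $b\in[k]$) and $y$; $(x^i_b\ne v_b)$ denotes $\neg x^i_b$ if $v_b=1$ and $x^i_b$ if $v_b=0$. Clauses: (1) for each vertex $v$ and distinct $i,j$: $\bigvee_b(x^i_b\ne v_b)\lor\bigvee_b(x^j_b\ne v_b)$; (2) for distinct $u,v$ with $\{u,v\}\in E(G)$ and distinct $i,j$: $y\lor\bigvee_b(x^i_b\ne u_b)\lor\bigvee_b(x^j_b\ne v_b)$; (3) for distinct $u,v$ with $\{u,v\}\notin E(G)$ and distinct $i,j$: $\neg y\lor\bigvee_b(x^i_b\ne u_b)\lor\bigvee_b(x^j_b\ne v_b)$. *)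

theory Defs
  imports Complex_Main
begin

datatype var = X nat nat | Y   \<comment> \<open>X i b is x^i_b, Y is y\<close>

type_synonym lit = "var \<times> bool"   \<comment> \<open>(v, True) = v, (v, False) = not v\<close>
type_synonym clause = "lit set"      \<comment> \<open>a clause is the disjunction of its literals\<close>

definition resolvent :: "clause \<Rightarrow> clause \<Rightarrow> clause \<Rightarrow> bool" where
  "resolvent C1 C2 D \<longleftrightarrow>
     (\<exists>x. (x, True) \<in> C1 \<and> (x, False) \<in> C2 \<and> D = (C1 - {(x, True)}) \<union> (C2 - {(x, False)}))"

datatype just = Ax | Res nat nat

type_synonym proof_seq = "(clause \<times> just) list"

definition refutation :: "clause set \<Rightarrow> proof_seq \<Rightarrow> bool" where
  "refutation F P \<longleftrightarrow> P \<noteq> [] \<and> fst (last P) = {} \<and>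
     (\<forall>p < length P. case snd (P ! p) of
        Ax \<Rightarrow> fst (P ! p) \<in> F
      | Res i j \<Rightarrow> i < p \<and> j < p \<and> resolvent (fst (P ! i)) (fst (P ! j)) (fst (P ! p)))"

definition uses :: "proof_seq \<Rightarrow> nat \<Rightarrow> nat" where
  "uses P q = (\<Sum>p<length P. case snd (P ! p) of Ax \<Rightarrow> 0
        | Res i j \<Rightarrow> (if i = q then 1 else 0) + (if j = q then 1 else 0))"

definition treelike_refutation :: "clause set \<Rightarrow> proof_seq \<Rightarrow> bool" where
  "treelike_refutation F P \<longleftrightarrow> refutation F P \<and>
     (\<forall>q < length P. snd (P ! q) \<noteq> Ax \<longrightarrow> uses P q \<le> 1)"

definition verts :: "nat \<Rightarrow> bool list set" where
  "verts k = {v. length v = k}"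

definition graph_on :: "nat \<Rightarrow> (bool list \<Rightarrow> bool list \<Rightarrow> bool) \<Rightarrow> bool" where
  "graph_on k E \<longleftrightarrow> (\<forall>u \<in> verts k. \<forall>v \<in> verts k. E u v \<longleftrightarrow> E v u) \<and> (\<forall>v \<in> verts k. \<not> E v v)"

definition is_clique :: "(bool list \<Rightarrow> bool list \<Rightarrow> bool) \<Rightarrow> bool list set \<Rightarrow> bool" where
  "is_clique E S \<longleftrightarrow> (\<forall>u\<in>S. \<forall>v\<in>S. u \<noteq> v \<longrightarrow> E u v)"

definition is_indep :: "(bool list \<Rightarrow> bool list \<Rightarrow> bool) \<Rightarrow> bool list set \<Rightarrow> bool" where
  "is_indep E S \<longleftrightarrow> (\<forall>u\<in>S. \<forall>v\<in>S. u \<noteq> v \<longrightarrow> \<not> E u v)"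

definition c_ramsey :: "real \<Rightarrow> nat \<Rightarrow> (bool list \<Rightarrow> bool list \<Rightarrow> bool) \<Rightarrow> bool" where
  "c_ramsey c k E \<longleftrightarrow> (\<forall>S \<subseteq> verts k. real (card S) = c * log 2 (real (2 ^ k)) \<longrightarrow>
       \<not> is_clique E S \<and> \<not> is_indep E S)"

text \<open>neq i v is the disjunction over b<k of (x^i_b \<noteq> v_b); bit v_b is v ! b (True = 1).\<close>
definition neq :: "nat \<Rightarrow> nat \<Rightarrow> bool list \<Rightarrow> clause" where
  "neq k i v = {(X i b, \<not> (v ! b)) | b. b < k}"

text \<open>Psi k m E, where m = c k is the number of indices i.\<close>
definition Psi :: "nat \<Rightarrow> nat \<Rightarrow> (bool list \<Rightarrow> bool list \<Rightarrow> bool) \<Rightarrow> clause set" where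
  "Psi k m E =
     {neq k i v \<union> neq k j v | v i j. v \<in> verts k \<and> i < m \<and> j < m \<and> i \<noteq> j}
   \<union> {insert (Y, True) (neq k i u \<union> neq k j v) | u v i j.
        u \<in> verts k \<and> v \<in> verts k \<and> u \<noteq> v \<and> E u v \<and> i < m \<and> j < m \<and> i \<noteq> j}
   \<union> {insert (Y, False) (neq k i u \<union> neq k j v) | u v i j.
        u \<in> verts k \<and> v \<in> verts k \<and> u \<noteq> v \<and> \<not> E u v \<and> i < m \<and> j < m \<and> i \<noteq> j}"

end

theory Submission
  imports Defs
begin

text \<open>Every assignment falsifies a clause of Psi_G: the bits of the x^i name c log n vertices,
  which either repeat (clause (1)) or form a set that, by the Ramsey property, contains both an
  edge and a non-edge, and the value of y falsifies a clause (2) or (3) on one of them.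
  An unsatisfiable CNF in N variables has a treelike refutation with fewer than 2^(N+1) lines,
  read off a decision tree: branch on a variable, refute both restrictions, and resolve the two
  final clauses on that variable. Here N = c (log n)^2 + 1, giving n^((c + 2) log n).\<close>

definition derivation :: "clause set \<Rightarrow> proof_seq \<Rightarrow> bool" where
  "derivation F P \<longleftrightarrow> (\<forall>p < length P. case snd (P ! p) of
        Ax \<Rightarrow> fst (P ! p) \<in> F
      | Res i j \<Rightarrow> i < p \<and> j < p \<and> resolvent (fst (P ! i)) (fst (P ! j)) (fst (P ! p)))"

definition valid_step :: "clause set \<Rightarrow> proof_seq \<Rightarrow> clause \<times> just \<Rightarrow> bool" where
  "valid_step F P l \<longleftrightarrow> (case snd l of
        Ax \<Rightarrow> fst l \<in> F
      | Res i j \<Rightarrow> i < length P \<and> j < length P \<and> resolvent (fst (P ! i)) (fst (P ! j)) (fst l))"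

definition premise_uses :: "nat \<Rightarrow> just \<Rightarrow> nat" where
  "premise_uses q J = (case J of Ax \<Rightarrow> 0
        | Res i j \<Rightarrow> (if i = q then 1 else 0) + (if j = q then 1 else 0))"

text \<open>Stronger than the condition in \<open>treelike_refutation\<close>, which exempts axiom lines.\<close>
definition treelike_derivation :: "clause set \<Rightarrow> proof_seq \<Rightarrow> bool" where
  "treelike_derivation F P \<longleftrightarrow> derivation F P \<and> (\<forall>q. uses P q \<le> 1)"

definition shift_just :: "nat \<Rightarrow> just \<Rightarrow> just" where
  "shift_just n J = (case J of Ax \<Rightarrow> Ax | Res i j \<Rightarrow> Res (i + n) (j + n))"

definition shift_proof :: "nat \<Rightarrow> proof_seq \<Rightarrow> proof_seq" where
  "shift_proof n P = map (\<lambda>(C, J). (C, shift_just n J)) P"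

lemma refutation_iff_derivation:
  "refutation F P \<longleftrightarrow> P \<noteq> [] \<and> fst (last P) = {} \<and> derivation F P"
  unfolding refutation_def derivation_def by blast

lemma uses_conv_sum_list: "uses P q = (\<Sum>l\<leftarrow>P. premise_uses q (snd l))"
  unfolding uses_def premise_uses_def by (simp add: sum_list_sum_nth atLeast0LessThan)

lemma uses_append: "uses (P @ Q) q = uses P q + uses Q q"
  by (simp add: uses_conv_sum_list)

lemma uses_shift_proof: "uses (shift_proof n P) q = (if q < n then 0 else uses P (q - n))"
  unfolding uses_conv_sum_list shift_proof_def
  by (induction P) (auto simp: premise_uses_def shift_just_def split: just.split)

lemma uses_Res: "uses [(D, Res i j)] q = (if i = q then 1 else 0) + (if j = q then 1 else 0)"
  by (simp add: uses_conv_sum_list premise_uses_def)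

lemma derivation_uses_last:
  assumes "derivation F P" "length P \<le> Suc q"
  shows "uses P q = 0"
proof -
  have "premise_uses q (snd (P ! p)) = 0" if "p < length P" for p
    using assms that unfolding derivation_def premise_uses_def by (fastforce split: just.split)
  then show ?thesis
    unfolding uses_def premise_uses_def by (simp add: sum.neutral split: just.split)
qed

lemma derivation_iff_valid_steps:
  "derivation F P \<longleftrightarrow> (\<forall>p < length P. valid_step F (take p P) (P ! p))"
  unfolding derivation_def valid_step_def
  by (intro all_cong imp_cong refl) (auto split: just.split)

lemma derivation_snoc: "derivation F (P @ [l]) \<longleftrightarrow> derivation F P \<and> valid_step F P l"
  unfolding derivation_iff_valid_steps by (auto simp: nth_append less_Suc_eq)

lemma length_shift_proof [simp]: "length (shift_proof n P) = length P"
  by (simp add: shift_proof_def)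

lemma fst_nth_append_shift:
  "i < length Q \<Longrightarrow> fst ((P @ shift_proof (length P) Q) ! (i + length P)) = fst (Q ! i)"
  by (simp add: nth_append shift_proof_def case_prod_beta)

lemma derivation_append_shift:
  assumes "derivation F P" "derivation F Q"
  shows "derivation F (P @ shift_proof (length P) Q)"
  using assms(2)
proof (induction Q rule: rev_induct)
  case Nil
  then show ?case using assms(1) by (simp add: shift_proof_def)
next
  case (snoc l Q)
  obtain C J where l: "l = (C, J)" by fastforce
  have "shift_proof (length P) (Q @ [l]) = shift_proof (length P) Q @ [(C, shift_just (length P) J)]"
    by (simp add: shift_proof_def l)
  then have "P @ shift_proof (length P) (Q @ [l]) =
      (P @ shift_proof (length P) Q) @ [(C, shift_just (length P) J)]"
    by simp
  then show ?case
    using snoc l by (auto simp: derivation_snoc valid_step_def shift_just_def fst_nth_append_shift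
        simp del: append_assoc split: just.split)
qed

lemma treelike_derivation_resolve:
  assumes A: "treelike_derivation F A" and B: "treelike_derivation F B"
    and "A \<noteq> []" "B \<noteq> []" and res: "resolvent (fst (last A)) (fst (last B)) D"
  shows "treelike_derivation F
           (A @ shift_proof (length A) B @ [(D, Res (length A - 1) (length A + length B - 1))])"
proof -
  define a b where "a = length A" and "b = length B"
  have "a > 0" "b > 0" using \<open>A \<noteq> []\<close> \<open>B \<noteq> []\<close> by (simp_all add: a_def b_def)
  have dA: "derivation F A" and dB: "derivation F B"
    using A B by (simp_all add: treelike_derivation_def)
  have "fst ((A @ shift_proof a B) ! (a - 1)) = fst (last A)"
    using \<open>a > 0\<close> by (simp add: a_def nth_append last_conv_nth)
  moreover have "fst ((A @ shift_proof a B) ! (a + b - 1)) = fst (last B)"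
    using fst_nth_append_shift[of "b - 1" B A] \<open>a > 0\<close> \<open>b > 0\<close>
    by (simp add: a_def b_def last_conv_nth add.commute)
  ultimately have "derivation F ((A @ shift_proof a B) @ [(D, Res (a - 1) (a + b - 1))])"
    unfolding derivation_snoc valid_step_def fst_conv snd_conv just.case length_append length_shift_proof
    using derivation_append_shift[OF dA dB] res \<open>a > 0\<close> \<open>b > 0\<close>
    by (simp only: a_def b_def) (simp del: length_greater_0_conv)
  moreover have "uses A q + uses (shift_proof a B) q + uses [(D, Res (a - 1) (a + b - 1))] q \<le> 1" for q
  proof (cases "q < a")
    case True
    then have "uses A q + (if a - 1 = q then 1 else 0) \<le> 1"
      using A derivation_uses_last[OF dA, of q] by (auto simp: treelike_derivation_def a_def)
    moreover have "a + b - 1 \<noteq> q" using True \<open>b > 0\<close> by linarith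
    ultimately show ?thesis using True by (simp add: uses_shift_proof uses_Res)
  next
    case False
    then have "uses B (q - a) + (if a + b - 1 = q then 1 else 0) \<le> 1"
      using B derivation_uses_last[OF dB, of "q - a"] by (auto simp: treelike_derivation_def b_def)
    moreover have "a - 1 \<noteq> q" using False \<open>a > 0\<close> by linarith
    moreover have "uses A q = 0" using False derivation_uses_last[OF dA, of q] by (simp add: a_def)
    ultimately show ?thesis using False by (simp add: uses_shift_proof uses_Res)
  qed
  ultimately show ?thesis
    by (simp add: treelike_derivation_def uses_append add.assoc a_def b_def)
qed

lemma resolvent_subset: "resolvent C1 C2 D \<Longrightarrow> D \<subseteq> C1 \<union> C2"
  unfolding resolvent_def by blast

lemma derivation_subset_Union:
  assumes "derivation F P" "p < length P"
  shows "fst (P ! p) \<subseteq> \<Union>F"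
  using assms(2)
proof (induction p rule: less_induct)
  case (less p)
  have line: "case snd (P ! p) of Ax \<Rightarrow> fst (P ! p) \<in> F
      | Res i j \<Rightarrow> i < p \<and> j < p \<and> resolvent (fst (P ! i)) (fst (P ! j)) (fst (P ! p))"
    using assms(1) less.prems unfolding derivation_def by blast
  then show ?case
  proof (cases "snd (P ! p)")
    case (Res i j)
    with line have "i < p" "j < p" "fst (P ! p) \<subseteq> fst (P ! i) \<union> fst (P ! j)"
      using resolvent_subset by auto
    with less.IH less.prems show ?thesis by (meson Un_least less_trans order_trans)
  qed auto
qed

definition falsifies :: "(var \<Rightarrow> bool) \<Rightarrow> clause \<Rightarrow> bool" where
  "falsifies \<alpha> C \<longleftrightarrow> (\<forall>(x, s) \<in> C. \<alpha> x \<noteq> s)"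

definition vars :: "clause \<Rightarrow> var set" where
  "vars C = fst ` C"

lemma falsifies_mono: "C \<subseteq> C' \<Longrightarrow> falsifies \<alpha> C' \<Longrightarrow> falsifies \<alpha> C"
  unfolding falsifies_def by blast

lemma falsifies_Un [simp]: "falsifies \<alpha> (C \<union> C') \<longleftrightarrow> falsifies \<alpha> C \<and> falsifies \<alpha> C'"
  unfolding falsifies_def by blast

lemma falsifies_insert [simp]: "falsifies \<alpha> (insert (x, s) C) \<longleftrightarrow> \<alpha> x \<noteq> s \<and> falsifies \<alpha> C"
  unfolding falsifies_def by blast

lemma vars_Un [simp]: "vars (C \<union> C') = vars C \<union> vars C'"
  unfolding vars_def by blast

lemma falsifies_fun_upd:
  assumes "falsifies (\<rho>(x := b)) C" "(x, \<not> b) \<notin> C"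
  shows "falsifies \<rho> C" "x \<notin> vars C"
proof -
  have "y \<noteq> x" if "(y, s) \<in> C" for y s
    using assms that unfolding falsifies_def by (cases s) force+
  then show "falsifies \<rho> C" "x \<notin> vars C"
    using assms(1) unfolding falsifies_def vars_def by fastforce+
qed

lemma treelike_derivation_of_falsified_clause:
  assumes "\<And>\<alpha>. (\<forall>x. x \<notin> set xs \<longrightarrow> \<alpha> x = \<rho> x) \<Longrightarrow> \<exists>C\<in>F. falsifies \<alpha> C"
  shows "\<exists>P. treelike_derivation F P \<and> P \<noteq> [] \<and> length P < 2 ^ Suc (length xs) \<and>
           falsifies \<rho> (fst (last P)) \<and> vars (fst (last P)) \<inter> set xs = {}"
  using assms
proof (induction xs arbitrary: \<rho>)
  case Nil
  then obtain C where "C \<in> F" "falsifies \<rho> C" by auto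
  then have "treelike_derivation F [(C, Ax)]"
    by (simp add: treelike_derivation_def derivation_def uses_conv_sum_list premise_uses_def)
  with \<open>falsifies \<rho> C\<close> show ?case by force
next
  case (Cons x xs)
  have "\<exists>P. treelike_derivation F P \<and> P \<noteq> [] \<and> length P < 2 ^ Suc (length xs) \<and>
          falsifies (\<rho>(x := b)) (fst (last P)) \<and> vars (fst (last P)) \<inter> set xs = {}" for b
    by (rule Cons.IH) (use Cons.prems in auto)
  then obtain A B where
    A: "treelike_derivation F A" "A \<noteq> []" "length A < 2 ^ Suc (length xs)"
       "falsifies (\<rho>(x := False)) (fst (last A))" "vars (fst (last A)) \<inter> set xs = {}" and
    B: "treelike_derivation F B" "B \<noteq> []" "length B < 2 ^ Suc (length xs)"
       "falsifies (\<rho>(x := True)) (fst (last B))" "vars (fst (last B)) \<inter> set xs = {}"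
    by meson
  show ?case
  proof (cases "(x, True) \<in> fst (last A) \<and> (x, False) \<in> fst (last B)")
    case False
    then consider "(x, True) \<notin> fst (last A)" | "(x, False) \<notin> fst (last B)" by blast
    then show ?thesis
    proof cases
      case 1
      with A falsifies_fun_upd[of \<rho> x False] show ?thesis by (auto intro!: exI[of _ A])
    next
      case 2
      with B falsifies_fun_upd[of \<rho> x True] show ?thesis by (auto intro!: exI[of _ B])
    qed
  next
    case True
    define D where "D = (fst (last A) - {(x, True)}) \<union> (fst (last B) - {(x, False)})"
    define P where "P = A @ shift_proof (length A) B @ [(D, Res (length A - 1) (length A + length B - 1))]"
    have "resolvent (fst (last A)) (fst (last B)) D"
      unfolding resolvent_def D_def using True by blast
    then have "treelike_derivation F P"
      unfolding P_def using A B by (intro treelike_derivation_resolve)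
    moreover have "length P < 2 ^ Suc (length (x # xs))"
      using A(3) B(3) by (simp add: P_def)
    moreover have "falsifies \<rho> D" "x \<notin> vars D"
      using falsifies_fun_upd[OF falsifies_mono[OF Diff_subset A(4)]]
        falsifies_fun_upd[OF falsifies_mono[OF Diff_subset B(4)]]
      by (simp_all add: D_def)
    moreover have "vars D \<inter> set xs = {}"
      using A(5) B(5) unfolding D_def vars_def by blast
    ultimately show ?thesis by (auto simp: P_def intro!: exI[of _ P])
  qed
qed

lemma unsatisfiable_treelike_refutation:
  assumes unsat: "\<And>\<alpha>. \<exists>C\<in>F. falsifies \<alpha> C" and vars_F: "\<And>C. C \<in> F \<Longrightarrow> vars C \<subseteq> set xs"
  shows "\<exists>P. treelike_refutation F P \<and> length P < 2 ^ Suc (length xs)"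
proof -
  obtain P where P: "treelike_derivation F P" "P \<noteq> []" "length P < 2 ^ Suc (length xs)"
      "vars (fst (last P)) \<inter> set xs = {}"
    using treelike_derivation_of_falsified_clause[of xs "\<lambda>_. False" F] unsat by blast
  have "fst (last P) \<subseteq> \<Union>F"
    using derivation_subset_Union[of F P "length P - 1"] P(1,2)
    by (simp add: treelike_derivation_def last_conv_nth)
  then have "vars (fst (last P)) \<subseteq> set xs"
    using vars_F unfolding vars_def by blast
  with P(4) have "fst (last P) = {}"
    unfolding vars_def by blast
  with P show ?thesis
    by (auto simp: treelike_refutation_def refutation_iff_derivation treelike_derivation_def)
qed

lemma falsifies_neq_assigned: "falsifies \<alpha> (neq k i (map (\<lambda>b. \<alpha> (X i b)) [0..<k]))"
  unfolding falsifies_def neq_def by auto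

lemma Psi_unsatisfiable:
  assumes m: "real m = c * log 2 (real (2 ^ k))" and R: "c_ramsey c k E"
  shows "\<exists>C\<in>Psi k m E. falsifies \<alpha> C"
proof -
  define v where "v i = map (\<lambda>b. \<alpha> (X i b)) [0..<k]" for i
  have v_verts: "v i \<in> verts k" for i
    unfolding v_def verts_def by simp
  have falsifies_v: "falsifies \<alpha> (neq k i (v i))" for i
    unfolding v_def by (rule falsifies_neq_assigned)
  show ?thesis
  proof (cases "inj_on v {..<m}")
    case False
    then obtain i j where ij: "i < m" "j < m" "i \<noteq> j" "v i = v j"
      unfolding inj_on_def by auto
    then have "neq k i (v i) \<union> neq k j (v i) \<in> Psi k m E"
      unfolding Psi_def using v_verts by blast
    with falsifies_v ij(4) show ?thesis by (metis falsifies_Un)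
  next
    case True
    have "card (v ` {..<m}) = m" "v ` {..<m} \<subseteq> verts k"
      using True v_verts by (auto simp: card_image)
    with R m have not_hom: "\<not> is_clique E (v ` {..<m}) \<and> \<not> is_indep E (v ` {..<m})"
      unfolding c_ramsey_def by auto
    obtain i j where ij: "i < m" "j < m" "i \<noteq> j" "v i \<noteq> v j" "E (v i) (v j) \<longleftrightarrow> \<not> \<alpha> Y"
    proof (cases "\<alpha> Y")
      case True
      with not_hom that show ?thesis unfolding is_clique_def by blast
    next
      case False
      with not_hom that show ?thesis unfolding is_indep_def by blast
    qed
    have "insert (Y, \<not> \<alpha> Y) (neq k i (v i) \<union> neq k j (v j)) \<in> Psi k m E"
    proof (cases "\<alpha> Y")
      case True
      with ij have "insert (Y, False) (neq k i (v i) \<union> neq k j (v j)) \<in> Psi k m E"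
        unfolding Psi_def using v_verts by blast
      with True show ?thesis by simp
    next
      case False
      with ij have "insert (Y, True) (neq k i (v i) \<union> neq k j (v j)) \<in> Psi k m E"
        unfolding Psi_def using v_verts by blast
      with False show ?thesis by simp
    qed
    moreover have "falsifies \<alpha> (insert (Y, \<not> \<alpha> Y) (neq k i (v i) \<union> neq k j (v j)))"
      using falsifies_v by simp
    ultimately show ?thesis by blast
  qed
qed

definition Psi_vars :: "nat \<Rightarrow> nat \<Rightarrow> var list" where
  "Psi_vars k m = Y # concat (map (\<lambda>i. map (X i) [0..<k]) [0..<m])"

lemma length_Psi_vars: "length (Psi_vars k m) = Suc (m * k)"
  unfolding Psi_vars_def by (simp add: length_concat o_def sum_list_triv)

lemma vars_Psi: "C \<in> Psi k m E \<Longrightarrow> vars C \<subseteq> set (Psi_vars k m)"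
  unfolding Psi_def neq_def Psi_vars_def vars_def by auto

lemma c_ramsey_imp_pos:
  assumes "c_ramsey c k E"
  shows "0 < k"
proof (rule ccontr)
  assume "\<not> 0 < k"
  then have "real (card {}) = c * log 2 (real (2 ^ k))" by simp
  with assms show False unfolding c_ramsey_def is_clique_def by blast
qed

lemma two_power_le_powr_log:
  fixes c :: real
  assumes "real m = c * real k" "0 < k"
  shows "2 ^ (m * k + 2) \<le> real (2 ^ k) powr ((c + 2) * log 2 (real (2 ^ k)))"
proof -
  have "1 \<le> real k"
    using assms(2) by simp
  then have "1 \<le> real k * real k"
    using mult_mono[of 1 "real k" 1 "real k"] by simp
  then have exponent: "real (m * k + 2) \<le> (c + 2) * real k * real k"
    using assms(1) by (simp add: algebra_simps)
  have "(2::real) ^ (m * k + 2) = 2 powr real (m * k + 2)"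
    by (rule powr_realpow[symmetric]) simp
  also have "\<dots> \<le> 2 powr ((c + 2) * real k * real k)"
    using exponent by (rule powr_mono) simp
  also have "\<dots> = real (2 ^ k) powr ((c + 2) * log 2 (real (2 ^ k)))"
    by (simp add: powr_realpow[symmetric] powr_powr mult_ac)
  finally show ?thesis .
qed

theorem mainTheorem2:
  fixes c :: real
  assumes "c > 0"
  shows "\<exists>C::real. \<forall>(k::nat) (m::nat) (E :: bool list \<Rightarrow> bool list \<Rightarrow> bool).
           real m = c * log 2 (real (2 ^ k)) \<longrightarrow> graph_on k E \<longrightarrow> c_ramsey c k E \<longrightarrow>
           (\<exists>P. treelike_refutation (Psi k m E) P \<and>
                real (length P) \<le> real (2 ^ k) powr (C * log 2 (real (2 ^ k))))"
proof (intro exI[of _ "c + 2"] allI impI)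
  fix k m E
  assume m: "real m = c * log 2 (real (2 ^ k))" and "graph_on k E" and R: "c_ramsey c k E"
  obtain P where P: "treelike_refutation (Psi k m E) P" "length P < 2 ^ Suc (length (Psi_vars k m))"
    using unsatisfiable_treelike_refutation[OF Psi_unsatisfiable[OF m R] vars_Psi[of _ k m E]] by blast
  have "length P \<le> 2 ^ (m * k + 2)"
    using P(2) unfolding length_Psi_vars by simp
  then have "real (length P) \<le> 2 ^ (m * k + 2)"
    by (metis of_nat_le_iff of_nat_numeral of_nat_power)
  also have "\<dots> \<le> real (2 ^ k) powr ((c + 2) * log 2 (real (2 ^ k)))"
    using m c_ramsey_imp_pos[OF R] by (intro two_power_le_powr_log) simp_all
  finally show "\<exists>P. treelike_refutation (Psi k m E) P \<and>
      real (length P) \<le> real (2 ^ k) powr ((c + 2) * log 2 (real (2 ^ k)))"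
    using P(1) by blast
qed

end
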